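(* Let $\mathbb{K}\in\{\mathbb{R},\mathbb{C}\}$, let $X$ be a linear space over $\mathbb{K}$ and $A\colon X\to\mathbb{K}$ a nonzero additive functional, and put $\phi(x,y)=A(x)A(y)$ for $x,y\in X$. Then a function $f\colon X\to\mathbb{K}$ satisfies $f(x+y)=f(x)f(y)-\phi(x,y)$ for all $x,y\in X$ if and only if $f(x)=\delta A(x)+1$ for all $x\in X$ with $\delta\in\{1,-1\}$.
   Context: A functional $A\colon X\to\mathbb{K}$ is additive if $A(x+y)=A(x)+A(y)$ for all $x,y\in X$ (it need not be linear). *)

theory Defs
  imports Complex_Main
begin

definition additive_fun :: "('x::ab_group_add \<Rightarrow> 'k::ab_group_add) \<Rightarrow> bool" where
  "additive_fun A \<longleftrightarrow> (\<forall>x y. A (x + y) = A x + A y)"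

end

theory Submission
  imports Defs
begin

text \<open>Expanding \<open>f ((x + y) + z) = f (x + (y + z))\<close> with the equation and additivity of \<open>A\<close>
  gives \<open>A x A y (f z - 1) = A y A z (f x - 1)\<close>. Choosing \<open>x = y = x\<^sub>0\<close> with \<open>A x\<^sub>0 \<noteq> 0\<close>
  shows that \<open>f = c A + 1\<close> for a constant \<open>c\<close>, and substituting back at \<open>(x\<^sub>0, x\<^sub>0)\<close>
  forces \<open>c\<^sup>2 = 1\<close>. Conversely \<open>\<delta> A + 1\<close> solves the equation whenever \<open>\<delta>\<^sup>2 = 1\<close>.\<close>

lemma additive_funD: "additive_fun A \<Longrightarrow> A (x + y) = A x + A y"
  unfolding additive_fun_def by blast

lemma affine_additive_solves:
  fixes A :: "'a::ab_group_add \<Rightarrow> 'k::comm_ring_1"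
  assumes "additive_fun A" and "\<delta> * \<delta> = 1"
  shows "\<delta> * A (x + y) + 1 = (\<delta> * A x + 1) * (\<delta> * A y + 1) - A x * A y"
proof -
  have "(\<delta> * A x + 1) * (\<delta> * A y + 1) - A x * A y
      = (\<delta> * \<delta>) * A x * A y + \<delta> * (A x + A y) + 1 - A x * A y"
    by (simp add: algebra_simps)
  also have "\<dots> = \<delta> * A (x + y) + 1"
    using assms by (simp add: additive_funD)
  finally show ?thesis by simp
qed

lemma solution_cocycle:
  fixes A f :: "'a::ab_group_add \<Rightarrow> 'k::comm_ring_1"
  assumes A: "additive_fun A" and f: "\<And>x y. f (x + y) = f x * f y - A x * A y"
  shows "A x * A y * (f z - 1) = A y * A z * (f x - 1)"
proof -
  have "f ((x + y) + z) = f (x + (y + z))"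
    by (simp add: add.assoc)
  then have "(f x * f y - A x * A y) * f z - (A x + A y) * A z
           = f x * (f y * f z - A y * A z) - A x * (A y + A z)"
    by (simp only: f additive_funD[OF A])
  then show ?thesis
    by (simp add: algebra_simps)
qed

lemma solution_affine:
  fixes A f :: "'a::ab_group_add \<Rightarrow> 'k::field"
  assumes A: "additive_fun A" and f: "\<And>x y. f (x + y) = f x * f y - A x * A y"
    and x0: "A x0 \<noteq> 0"
  shows "f z = (f x0 - 1) / A x0 * A z + 1"
proof -
  have "A x0 * A x0 * (f z - 1) = A x0 * A z * (f x0 - 1)"
    by (rule solution_cocycle[OF A f])
  then have "A x0 * (f z - 1) = A z * (f x0 - 1)"
    using x0 by (simp add: mult.assoc)
  then show ?thesis
    using x0 by (simp add: field_simps)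
qed

theorem additive_solution_iff:
  fixes A f :: "'a::ab_group_add \<Rightarrow> 'k::field"
  assumes A: "additive_fun A" and nz: "A \<noteq> (\<lambda>_. 0)"
  shows "(\<forall>x y. f (x + y) = f x * f y - A x * A y) \<longleftrightarrow>
         (\<exists>\<delta>\<in>{1, -1}. \<forall>x. f x = \<delta> * A x + 1)"
proof
  assume "\<forall>x y. f (x + y) = f x * f y - A x * A y"
  then have f: "\<And>x y. f (x + y) = f x * f y - A x * A y" by blast
  obtain x0 where x0: "A x0 \<noteq> 0" using nz by auto
  define c where "c = (f x0 - 1) / A x0"
  have fc: "\<And>z. f z = c * A z + 1"
    unfolding c_def by (rule solution_affine[OF A f x0])
  have "c * A (x0 + x0) + 1 = (c * A x0 + 1) * (c * A x0 + 1) - A x0 * A x0"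
    using f[of x0 x0] by (simp only: fc)
  then have "(c * c - 1) * (A x0 * A x0) = 0"
    by (simp add: additive_funD[OF A] algebra_simps)
  then have "c * c = 1"
    using x0 by simp
  then have "c \<in> {1, -1}"
    by (simp add: square_eq_1_iff)
  with fc show "\<exists>\<delta>\<in>{1, -1}. \<forall>x. f x = \<delta> * A x + 1" by blast
next
  assume "\<exists>\<delta>\<in>{1, -1}. \<forall>x. f x = \<delta> * A x + 1"
  then obtain \<delta> where "\<delta> \<in> {1, -1}" and f: "\<And>x. f x = \<delta> * A x + 1" by blast
  then have "\<delta> * \<delta> = 1" by auto
  then show "\<forall>x y. f (x + y) = f x * f y - A x * A y"
    by (simp only: f affine_additive_solves[OF A] simp_thms)
qed

theorem mainTheorem10:
  shows "(\<forall>(A::'x::real_vector \<Rightarrow> real) (f::'x \<Rightarrow> real).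
            additive_fun A \<longrightarrow> A \<noteq> (\<lambda>_. 0) \<longrightarrow>
            ((\<forall>x y. f (x + y) = f x * f y - A x * A y) \<longleftrightarrow>
             (\<exists>\<delta>\<in>{1, -1}. \<forall>x. f x = \<delta> * A x + 1)))
       \<and> (\<forall>(sc::complex \<Rightarrow> 'y::ab_group_add \<Rightarrow> 'y) (A::'y \<Rightarrow> complex) (f::'y \<Rightarrow> complex).
            vector_space sc \<longrightarrow> additive_fun A \<longrightarrow> A \<noteq> (\<lambda>_. 0) \<longrightarrow>
            ((\<forall>x y. f (x + y) = f x * f y - A x * A y) \<longleftrightarrow>
             (\<exists>\<delta>\<in>{1, -1}. \<forall>x. f x = \<delta> * A x + 1)))"
  by (intro conjI allI impI additive_solution_iff)

end
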